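(* Let $(M,\cdot,1)$ be a monoid, $\Sigma$ a finite alphabet, $A=(Q,\Sigma,u,i_u,\delta,w,\rho)$ an $M$-DFA, and $\pi$ a selection function for $P_A/\approx_A$ as described below. Then the pair $(g^\pi_A,f^\pi_A)$ is a factorization on $L$, i.e. $g^\pi_A(\ell)\cdot f^\pi_A(\ell)=\ell$ for all $\ell\in L$.
   Context: $L$ is the set of all functions $\Sigma^*\to M$; $(m\cdot\ell)(\gamma)=m\cdot\ell(\gamma)$. A factorization on $L$ is a pair $(g,f)$ with $g:L\to M$, $f:L\to L$, $g(\ell)\cdot f(\ell)=\ell$ for all $\ell$. An $M$-DFA is $A=(Q,\Sigma,u,i_u,\delta,w,\rho)$ with $Q$ finite nonempty, initial state $u$, initial value $i_u\in M$, $\delta:Q\times\Sigma\to Q$, $w:Q\times\Sigma\to M$, $\rho:Q\to M$. Write $q\alpha$ for the extended transition ($q\varepsilon=q$, $q(\alpha\sigma)=\delta(q\alpha,\sigma)$), $w^*(q,\varepsilon)=1$, $w^*(q,\alpha\sigma)=w^*(q,\alpha)\cdot w(q\alpha,\sigma)$. $\mathcal{A}(\alpha)=i_u\cdot w^*(u,\alpha)\cdot\rho(u\alpha)$ and, for $q\in Q$, $\mathcal{A}_q(\alpha)=w^*(q,\alpha)\cdot\rho(q\alpha)$. For a word $\alpha$, $\Delta_\alpha(\ell)(\gamma)=\ell(\alpha\gamma)$. Natural factorization: let $P_A=\{((\sigma,q),\Delta_\sigma(\mathcal{A}_q))\mid\sigma\in\Sigma,q\in Q\}\cup\{((\varepsilon,u),\mathcal{A})\}$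 and let $\approx_A$ be the equivalence relation on $P_A$ identifying two elements iff their $M$-language components are equal. A selection function $\pi$ chooses one representative in each class of $P_A/\approx_A$, always choosing $((\varepsilon,u),\mathcal{A})$ as the representative of its class. Define $f^\pi_A:L\to L$, $g^\pi_A:L\to M$ by: if $\ell=\mathcal{A}$, then $f^\pi_A(\ell)=\mathcal{A}_u$, $g^\pi_A(\ell)=i_u$; if $\ell\neq\mathcal{A}$ and $\ell$ is the language component of some class of $P_A/\approx_A$ whose chosen representative is $((\sigma,q),\Delta_\sigma(\mathcal{A}_q))$, then $f^\pi_A(\ell)=\mathcal{A}_{q\sigma}$, $g^\pi_A(\ell)=w(q,\sigma)$; otherwise $f^\pi_A(\ell)=\ell$, $g^\pi_A(\ell)=1$. *)

theory Defs
  imports Main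
begin

text \<open>An M-DFA is given by parameters: initial state u, initial value iu,
  transition function dl, weight function wt, final-weight function rho.
  The state set is a finite type 'q (hence finite and nonempty).\<close>

definition smult_lang :: "'m::monoid_mult \<Rightarrow> ('s list \<Rightarrow> 'm) \<Rightarrow> ('s list \<Rightarrow> 'm)" where
  "smult_lang m l = (\<lambda>\<gamma>. m * l \<gamma>)"

definition dstar :: "('q \<Rightarrow> 's \<Rightarrow> 'q) \<Rightarrow> 'q \<Rightarrow> 's list \<Rightarrow> 'q" where
  "dstar dl q \<alpha> = foldl dl q \<alpha>"

definition wstar :: "('q \<Rightarrow> 's \<Rightarrow> 'q) \<Rightarrow> ('q \<Rightarrow> 's \<Rightarrow> 'm::monoid_mult) \<Rightarrow> 'q \<Rightarrow> 's list \<Rightarrow> 'm" where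
  "wstar dl wt q \<alpha> = snd (foldl (\<lambda>(p, m) \<sigma>. (dl p \<sigma>, m * wt p \<sigma>)) (q, 1) \<alpha>)"

definition aut_lang :: "'q \<Rightarrow> 'm::monoid_mult \<Rightarrow> ('q \<Rightarrow> 's \<Rightarrow> 'q) \<Rightarrow> ('q \<Rightarrow> 's \<Rightarrow> 'm) \<Rightarrow> ('q \<Rightarrow> 'm)
    \<Rightarrow> 's list \<Rightarrow> 'm" where
  "aut_lang u iu dl wt rho = (\<lambda>\<alpha>. iu * wstar dl wt u \<alpha> * rho (dstar dl u \<alpha>))"

definition state_lang :: "('q \<Rightarrow> 's \<Rightarrow> 'q) \<Rightarrow> ('q \<Rightarrow> 's \<Rightarrow> 'm::monoid_mult) \<Rightarrow> ('q \<Rightarrow> 'm)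
    \<Rightarrow> 'q \<Rightarrow> 's list \<Rightarrow> 'm" where
  "state_lang dl wt rho q = (\<lambda>\<alpha>. wstar dl wt q \<alpha> * rho (dstar dl q \<alpha>))"

definition Delta :: "'s list \<Rightarrow> ('s list \<Rightarrow> 'm) \<Rightarrow> ('s list \<Rightarrow> 'm)" where
  "Delta \<alpha> l = (\<lambda>\<gamma>. l (\<alpha> @ \<gamma>))"

text \<open>The set P_A. A key (Some sigma, q) stands for (sigma, q); the key (None, u) stands for (eps, u).\<close>
definition PA :: "'q \<Rightarrow> 'm::monoid_mult \<Rightarrow> ('q \<Rightarrow> 's \<Rightarrow> 'q) \<Rightarrow> ('q \<Rightarrow> 's \<Rightarrow> 'm) \<Rightarrow> ('q \<Rightarrow> 'm)
    \<Rightarrow> (('s option \<times> 'q) \<times> ('s list \<Rightarrow> 'm)) set" where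
  "PA u iu dl wt rho =
     {((Some \<sigma>, q), Delta [\<sigma>] (state_lang dl wt rho q)) | \<sigma> q. True}
     \<union> {((None, u), aut_lang u iu dl wt rho)}"

text \<open>Classes of approx_A are in bijection with the
  language components occurring in P_A, so a selection function is represented by a map sel
  sending each such language l to the key of the chosen representative (sel l, l) \<in> P_A;
  the class of A must be represented by ((eps,u), A).\<close>
definition is_selection :: "'q \<Rightarrow> 'm::monoid_mult \<Rightarrow> ('q \<Rightarrow> 's \<Rightarrow> 'q) \<Rightarrow> ('q \<Rightarrow> 's \<Rightarrow> 'm) \<Rightarrow> ('q \<Rightarrow> 'm)
    \<Rightarrow> (('s list \<Rightarrow> 'm) \<Rightarrow> 's option \<times> 'q) \<Rightarrow> bool" where
  "is_selection u iu dl wt rho sel \<longleftrightarrow>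
     (\<forall>l \<in> snd ` PA u iu dl wt rho. (sel l, l) \<in> PA u iu dl wt rho) \<and>
     sel (aut_lang u iu dl wt rho) = (None, u)"

definition f_pi :: "'q \<Rightarrow> 'm::monoid_mult \<Rightarrow> ('q \<Rightarrow> 's \<Rightarrow> 'q) \<Rightarrow> ('q \<Rightarrow> 's \<Rightarrow> 'm) \<Rightarrow> ('q \<Rightarrow> 'm)
    \<Rightarrow> (('s list \<Rightarrow> 'm) \<Rightarrow> 's option \<times> 'q) \<Rightarrow> ('s list \<Rightarrow> 'm) \<Rightarrow> ('s list \<Rightarrow> 'm)" where
  "f_pi u iu dl wt rho sel l =
     (if l = aut_lang u iu dl wt rho then state_lang dl wt rho u
      else if l \<in> snd ` PA u iu dl wt rho then
        (case sel l of (Some \<sigma>, q) \<Rightarrow> state_lang dl wt rho (dl q \<sigma>) | (None, _) \<Rightarrow> l)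
      else l)"

definition g_pi :: "'q \<Rightarrow> 'm::monoid_mult \<Rightarrow> ('q \<Rightarrow> 's \<Rightarrow> 'q) \<Rightarrow> ('q \<Rightarrow> 's \<Rightarrow> 'm) \<Rightarrow> ('q \<Rightarrow> 'm)
    \<Rightarrow> (('s list \<Rightarrow> 'm) \<Rightarrow> 's option \<times> 'q) \<Rightarrow> ('s list \<Rightarrow> 'm) \<Rightarrow> 'm" where
  "g_pi u iu dl wt rho sel l =
     (if l = aut_lang u iu dl wt rho then iu
      else if l \<in> snd ` PA u iu dl wt rho then
        (case sel l of (Some \<sigma>, q) \<Rightarrow> wt q \<sigma> | (None, _) \<Rightarrow> 1)
      else 1)"

definition is_factorization :: "(('s list \<Rightarrow> 'm::monoid_mult) \<Rightarrow> 'm) \<Rightarrow> (('s list \<Rightarrow> 'm) \<Rightarrow> ('s list \<Rightarrow> 'm)) \<Rightarrow> bool" where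
  "is_factorization g f \<longleftrightarrow> (\<forall>l. smult_lang (g l) (f l) = l)"

end

theory Submission
  imports Defs
begin

(* Reading a letter s in state q emits the weight wt q s and moves to dl q s, so
   Delta_s(A_q) = wt q s * A_(dl q s). Hence, apart from the class of A itself (where
   A = i_u * A_u), every language of P_A equals g(l) * f(l) whichever representative the
   selection picks, and outside P_A the factorization is the trivial 1 * l. *)

lemma foldl_weight_acc:
  "snd (foldl (\<lambda>(p, m) \<sigma>. (dl p \<sigma>, m * wt p \<sigma>)) (p, m) \<alpha>)
   = (m::'m::monoid_mult) * snd (foldl (\<lambda>(p, m) \<sigma>. (dl p \<sigma>, m * wt p \<sigma>)) (p, 1) \<alpha>)"
proof (induction \<alpha> arbitrary: p m)
  case Nil
  then show ?case by simp
next
  case (Cons \<sigma> \<alpha>)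
  show ?case
    using Cons[of "dl p \<sigma>" "m * wt p \<sigma>"] Cons[of "dl p \<sigma>" "wt p \<sigma>"]
    by (simp add: mult.assoc)
qed

lemma wstar_Cons: "wstar dl wt q (\<sigma> # \<alpha>) = wt q \<sigma> * wstar dl wt (dl q \<sigma>) \<alpha>"
  unfolding wstar_def by (simp add: foldl_weight_acc[of _ _ _ "wt q \<sigma>"])

lemma dstar_Cons: "dstar dl q (\<sigma> # \<alpha>) = dstar dl (dl q \<sigma>) \<alpha>"
  unfolding dstar_def by simp

lemma Delta_state_lang:
  "Delta [\<sigma>] (state_lang dl wt rho q) = smult_lang (wt q \<sigma>) (state_lang dl wt rho (dl q \<sigma>))"
  unfolding Delta_def smult_lang_def state_lang_def
  by (simp add: wstar_Cons dstar_Cons mult.assoc)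

lemma aut_lang_eq_smult_state_lang:
  "aut_lang u iu dl wt rho = smult_lang iu (state_lang dl wt rho u)"
  unfolding aut_lang_def smult_lang_def state_lang_def by (simp add: mult.assoc)

lemma smult_lang_one [simp]: "smult_lang 1 l = l"
  unfolding smult_lang_def by simp

lemma selection_letter_representative:
  assumes "is_selection u iu dl wt rho sel"
    and "l \<noteq> aut_lang u iu dl wt rho" and "l \<in> snd ` PA u iu dl wt rho"
  obtains \<sigma> q where "sel l = (Some \<sigma>, q)" and "l = Delta [\<sigma>] (state_lang dl wt rho q)"
proof -
  have "(sel l, l) \<in> PA u iu dl wt rho"
    using assms(1,3) unfolding is_selection_def by blast
  with assms(2) show ?thesis
    using that unfolding PA_def by auto
qed

theorem lemma4:
  fixes u :: "'q::finite" and iu :: "'m::monoid_mult"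
    and dl :: "'q \<Rightarrow> 's::finite \<Rightarrow> 'q" and wt :: "'q \<Rightarrow> 's \<Rightarrow> 'm" and rho :: "'q \<Rightarrow> 'm"
    and sel :: "('s list \<Rightarrow> 'm) \<Rightarrow> 's option \<times> 'q"
  assumes "is_selection u iu dl wt rho sel"
  shows "is_factorization (g_pi u iu dl wt rho sel) (f_pi u iu dl wt rho sel)"
  unfolding is_factorization_def
proof
  fix l
  consider (aut) "l = aut_lang u iu dl wt rho"
    | (letter) "l \<noteq> aut_lang u iu dl wt rho" "l \<in> snd ` PA u iu dl wt rho"
    | (other) "l \<notin> snd ` PA u iu dl wt rho" "l \<noteq> aut_lang u iu dl wt rho"
    by blast
  then show "smult_lang (g_pi u iu dl wt rho sel l) (f_pi u iu dl wt rho sel l) = l"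
  proof cases
    case aut
    then show ?thesis
      unfolding g_pi_def f_pi_def by (simp add: aut_lang_eq_smult_state_lang)
  next
    case letter
    with assms obtain \<sigma> q where "sel l = (Some \<sigma>, q)" "l = Delta [\<sigma>] (state_lang dl wt rho q)"
      by (rule selection_letter_representative)
    with letter show ?thesis
      unfolding g_pi_def f_pi_def by (simp add: Delta_state_lang)
  next
    case other
    then show ?thesis
      unfolding g_pi_def f_pi_def by simp
  qed
qed

end
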